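(* Let $\alpha,\beta,\gamma,\delta,\epsilon,\mu$ be parameters and let $$A_0=\begin{pmatrix}\alpha&\beta&\gamma\\\beta&\epsilon&\delta\\\gamma&\delta&\mu\end{pmatrix},\qquad A_1=\begin{pmatrix}\alpha_1&\beta_1&\gamma_1\\\beta_1&\epsilon_1&\delta_1\\\gamma_1&\delta_1&\mu_1\end{pmatrix},$$ with $\alpha_1=\alpha\epsilon-\beta^2$, $\beta_1=2\alpha\delta-2\beta\gamma$, $\gamma_1=\beta\delta-\gamma\epsilon$, $\epsilon_1=4\alpha\mu-4\gamma^2$, $\delta_1=2\beta\mu-2\gamma\delta$, $\mu_1=\epsilon\mu-\delta^2$. Put $\mathbf{X}=(x^2,x,1)^T$, $\mathbf{Y}=(y^2,y,1)^T$ and $I(x,y)=\dfrac{\mathbf{X}^TA_0\mathbf{Y}}{\mathbf{X}^TA_1\mathbf{Y}}$. Consider the maps $\Psi,\Psi_1:(x,y)\mapsto(\bar x,\bar y)$ given respectively by $$\Psi:\quad \bar x=y,\qquad \bar y=-\frac{2\gamma y^2+2\delta y+2\mu+x(\beta y^2+\epsilon y+\delta)}{\beta y^2+\epsilon y+\delta+2x(\alpha y^2+\beta y+\gamma)},$$ $$\Psi_1:\quad \bar x=y,\qquad \bar y=-\frac{2\gamma_1 y^2+2\delta_1 y+2\mu_1+x(\beta_1 y^2+\epsilon_1 y+\delta_1)}{\beta_1 y^2+\epsilon_1 y+\delta_1+2x(\alpha_1 y^2+\beta_1 y+\gamma_1)}.$$ Then both $\Psi$ and $\Psi_1$ preserve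 $I^2$ (i.e. $I(\bar x,\bar y)^2=I(x,y)^2$). Moreover $\Psi$ is anti measure-preserving and $\Psi_1$ is measure-preserving, both with density $m(x,y)=\left(\mathbf{X}^TA_0\mathbf{Y}\right)^{-1}$.
   Context: A map $(x,y)\mapsto(\bar x,\bar y)$ with Jacobian determinant $J=\det\frac{\partial(\bar x,\bar y)}{\partial(x,y)}$ is measure-preserving with density $m$ if $J=\dfrac{m(x,y)}{m(\bar x,\bar y)}$, and anti measure-preserving with density $m$ if $J=-\dfrac{m(x,y)}{m(\bar x,\bar y)}$. *)

theory Defs
  imports "HOL-Analysis.Analysis"
begin

definition symmat :: "real \<Rightarrow> real \<Rightarrow> real \<Rightarrow> real \<Rightarrow> real \<Rightarrow> real \<Rightarrow> real^3^3" where
  "symmat a b g d e m = vector [vector [a, b, g], vector [b, e, d], vector [g, d, m]]"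

definition quadvec :: "real \<Rightarrow> real^3" where
  "quadvec x = vector [x^2, x, 1]"

definition biquad :: "real^3^3 \<Rightarrow> real \<times> real \<Rightarrow> real" where
  "biquad A p = quadvec (fst p) \<bullet> (A *v quadvec (snd p))"

definition qrt_map :: "real \<Rightarrow> real \<Rightarrow> real \<Rightarrow> real \<Rightarrow> real \<Rightarrow> real \<Rightarrow> real \<times> real \<Rightarrow> real \<times> real" where
  "qrt_map a b g d e m p = (let x = fst p; y = snd p in
     (y, - (2*g*y^2 + 2*d*y + 2*m + x*(b*y^2 + e*y + d)) / (b*y^2 + e*y + d + 2*x*(a*y^2 + b*y + g))))"

definition qrt_den :: "real \<Rightarrow> real \<Rightarrow> real \<Rightarrow> real \<Rightarrow> real \<Rightarrow> real \<Rightarrow> real \<times> real \<Rightarrow> real" where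
  "qrt_den a b g d e m p = (let x = fst p; y = snd p in b*y^2 + e*y + d + 2*x*(a*y^2 + b*y + g))"

definition jacobian_det :: "(real \<times> real \<Rightarrow> real \<times> real) \<Rightarrow> real \<times> real \<Rightarrow> real" where
  "jacobian_det F p = (let D = frechet_derivative F (at p) in
     fst (D (1,0)) * snd (D (0,1)) - fst (D (0,1)) * snd (D (1,0)))"

definition measure_preserving_at :: "(real \<times> real \<Rightarrow> real \<times> real) \<Rightarrow> (real \<times> real \<Rightarrow> real) \<Rightarrow> real \<times> real \<Rightarrow> bool" where
  "measure_preserving_at F m p \<longleftrightarrow> F differentiable (at p) \<and> jacobian_det F p = m p / m (F p)"

definition anti_measure_preserving_at :: "(real \<times> real \<Rightarrow> real \<times> real) \<Rightarrow> (real \<times> real \<Rightarrow> real) \<Rightarrow> real \<times> real \<Rightarrow> bool" where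
  "anti_measure_preserving_at F m p \<longleftrightarrow> F differentiable (at p) \<and> jacobian_det F p = - (m p / m (F p))"


definition A1mat :: "real \<Rightarrow> real \<Rightarrow> real \<Rightarrow> real \<Rightarrow> real \<Rightarrow> real \<Rightarrow> real^3^3" where
  "A1mat a b g d e m = symmat (a*e - b^2) (2*a*d - 2*b*g) (b*d - g*e) (2*b*m - 2*g*d) (4*a*m - 4*g^2) (e*m - d^2)"

definition Psi1_map :: "real \<Rightarrow> real \<Rightarrow> real \<Rightarrow> real \<Rightarrow> real \<Rightarrow> real \<Rightarrow> real \<times> real \<Rightarrow> real \<times> real" where
  "Psi1_map a b g d e m = qrt_map (a*e - b^2) (2*a*d - 2*b*g) (b*d - g*e) (2*b*m - 2*g*d) (4*a*m - 4*g^2) (e*m - d^2)"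

definition Psi1_den :: "real \<Rightarrow> real \<Rightarrow> real \<Rightarrow> real \<Rightarrow> real \<Rightarrow> real \<Rightarrow> real \<times> real \<Rightarrow> real" where
  "Psi1_den a b g d e m = qrt_den (a*e - b^2) (2*a*d - 2*b*g) (b*d - g*e) (2*b*m - 2*g*d) (4*a*m - 4*g^2) (e*m - d^2)"

definition I_inv :: "real \<Rightarrow> real \<Rightarrow> real \<Rightarrow> real \<Rightarrow> real \<Rightarrow> real \<Rightarrow> real \<times> real \<Rightarrow> real" where
  "I_inv a b g d e m p = biquad (symmat a b g d e m) p / biquad (A1mat a b g d e m) p"

definition dens :: "real \<Rightarrow> real \<Rightarrow> real \<Rightarrow> real \<Rightarrow> real \<Rightarrow> real \<Rightarrow> real \<times> real \<Rightarrow> real" where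
  "dens a b g d e m p = inverse (biquad (symmat a b g d e m) p)"

end

theory Submission
  imports Defs
begin

(*
  Write X^T A Y = a(y) x^2 + b(y) x + c(y). By symmetry of A the same form, read with x and y
  exchanged, is a quadratic in its second argument with coefficients a(y), b(y), c(y); so
  substituting (y, ybar) with ybar = -N/D, N = 2c + x b, D = b + 2 x a, gives
  B(y, ybar) D^2 = a N^2 - b N D + c D^2, a quadratic form in x. For A = A0 it equals
  -Delta(y) B0(x, y), where Delta = b^2 - 4 a c, and for A = A1 it equals +Delta(y) B1(x, y);
  hence I changes sign and I^2 is invariant. The Jacobian of (x, y) |-> (y, ybar) is
  -d ybar / dx = (b D - 2 a N) / D^2 = Delta / D^2, which against the factor -Delta of B0 makes
  Psi anti measure-preserving for m = 1/B0. Psi1 is the same construction for A1: now B1 picks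
  up -Delta1 and B0 picks up +Delta1, so the signs are reversed and Psi1 preserves m.
*)

definition qrt_num :: "real \<Rightarrow> real \<Rightarrow> real \<Rightarrow> real \<Rightarrow> real \<Rightarrow> real \<Rightarrow> real \<times> real \<Rightarrow> real" where
  "qrt_num a b g d e m p = (let x = fst p; y = snd p in 2*g*y^2 + 2*d*y + 2*m + x*(b*y^2 + e*y + d))"

definition qrt_discr :: "real \<Rightarrow> real \<Rightarrow> real \<Rightarrow> real \<Rightarrow> real \<Rightarrow> real \<Rightarrow> real \<Rightarrow> real" where
  "qrt_discr a b g d e m y = (b*y^2 + e*y + d)^2 - 4*(a*y^2 + b*y + g)*(g*y^2 + d*y + m)"

lemma qrt_map_eq:
  "qrt_map a b g d e m = (\<lambda>q. (snd q, - (qrt_num a b g d e m q / qrt_den a b g d e m q)))"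
  by (simp add: fun_eq_iff qrt_map_def qrt_num_def qrt_den_def Let_def minus_divide_left)

lemma biquad_symmat:
  "biquad (symmat a b g d e m) p =
     fst p^2 * (a * (snd p)^2 + b * snd p + g) + fst p * (b * (snd p)^2 + e * snd p + d)
     + (g * (snd p)^2 + d * snd p + m)"
  unfolding biquad_def symmat_def quadvec_def
  by (simp add: inner_vec_def matrix_vector_mult_def sum_3 algebra_simps power2_eq_square)

lemma biquad_symmat_qrt_map:
  assumes "qrt_den a b g d e m p \<noteq> 0"
  shows "biquad (symmat a' b' g' d' e' m') (qrt_map a b g d e m p) * qrt_den a b g d e m p ^ 2
     = (a' * (snd p)^2 + b' * snd p + g') * qrt_num a b g d e m p ^ 2
       - (b' * (snd p)^2 + e' * snd p + d') * qrt_num a b g d e m p * qrt_den a b g d e m p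
       + (g' * (snd p)^2 + d' * snd p + m') * qrt_den a b g d e m p ^ 2"
  using assms by (simp add: qrt_map_eq biquad_symmat field_simps power2_eq_square)

lemma biquad_symmat_qrt_map_self:
  assumes "qrt_den a b g d e m p \<noteq> 0"
  shows "biquad (symmat a b g d e m) (qrt_map a b g d e m p) * qrt_den a b g d e m p ^ 2
     = - qrt_discr a b g d e m (snd p) * biquad (symmat a b g d e m) p"
  unfolding biquad_symmat_qrt_map[OF assms]
  by (simp add: biquad_symmat qrt_num_def qrt_den_def qrt_discr_def Let_def) algebra

lemma biquad_A1mat_qrt_map:
  assumes "qrt_den a b g d e m p \<noteq> 0"
  shows "biquad (A1mat a b g d e m) (qrt_map a b g d e m p) * qrt_den a b g d e m p ^ 2
     = qrt_discr a b g d e m (snd p) * biquad (A1mat a b g d e m) p"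
  unfolding A1mat_def biquad_symmat_qrt_map[OF assms]
  by (simp add: biquad_symmat qrt_num_def qrt_den_def qrt_discr_def Let_def) algebra

lemma biquad_symmat_Psi1_map:
  assumes "Psi1_den a b g d e m p \<noteq> 0"
  shows "biquad (symmat a b g d e m) (Psi1_map a b g d e m p) * Psi1_den a b g d e m p ^ 2
     = qrt_discr (a*e - b^2) (2*a*d - 2*b*g) (b*d - g*e) (2*b*m - 2*g*d) (4*a*m - 4*g^2) (e*m - d^2) (snd p)
       * biquad (symmat a b g d e m) p"
  unfolding Psi1_map_def Psi1_den_def biquad_symmat_qrt_map[OF assms[unfolded Psi1_den_def]]
  by (simp add: biquad_symmat qrt_num_def qrt_den_def qrt_discr_def Let_def) algebra

lemma jacobian_det_shear:
  assumes "(f has_derivative f') (at p)"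
  shows "(\<lambda>q. (snd q, f q)) differentiable (at p)"
    and "jacobian_det (\<lambda>q. (snd q, f q)) p = - f' (1, 0)"
proof -
  have D: "((\<lambda>q. (snd q, f q)) has_derivative (\<lambda>h. (snd h, f' h))) (at p)"
    by (intro has_derivative_Pair has_derivative_snd has_derivative_ident assms)
  then show "(\<lambda>q. (snd q, f q)) differentiable (at p)"
    by (auto simp: differentiable_def)
  show "jacobian_det (\<lambda>q. (snd q, f q)) p = - f' (1, 0)"
    unfolding jacobian_det_def Let_def frechet_derivative_at[OF D, symmetric] by simp
qed

lemma has_derivative_qrt_num:
  "(qrt_num a b g d e m has_derivative
     (\<lambda>h. (b * (snd p)^2 + e * snd p + d) * fst h
          + (4*g * snd p + 2*d + fst p * (2*b * snd p + e)) * snd h)) (at p)"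
  unfolding qrt_num_def Let_def
  by (auto intro!: derivative_eq_intros simp: algebra_simps)

lemma has_derivative_qrt_den:
  "(qrt_den a b g d e m has_derivative
     (\<lambda>h. 2 * (a * (snd p)^2 + b * snd p + g) * fst h
          + (2*b * snd p + e + 2 * fst p * (2*a * snd p + b)) * snd h)) (at p)"
  unfolding qrt_den_def Let_def
  by (auto intro!: derivative_eq_intros simp: algebra_simps)

lemma jacobian_det_qrt_map:
  assumes "qrt_den a b g d e m p \<noteq> 0"
  shows "qrt_map a b g d e m differentiable (at p)"
    and "jacobian_det (qrt_map a b g d e m) p = qrt_discr a b g d e m (snd p) / qrt_den a b g d e m p ^ 2"
proof -
  note quotient = has_derivative_minus[OF has_derivative_divide[OF has_derivative_qrt_num has_derivative_qrt_den assms]]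
  show "qrt_map a b g d e m differentiable (at p)"
    unfolding qrt_map_eq by (rule jacobian_det_shear(1)[OF quotient])
  have "jacobian_det (qrt_map a b g d e m) p
      = ((b * (snd p)^2 + e * snd p + d) * qrt_den a b g d e m p
         - 2 * (a * (snd p)^2 + b * snd p + g) * qrt_num a b g d e m p) / qrt_den a b g d e m p ^ 2"
    unfolding qrt_map_eq jacobian_det_shear(2)[OF quotient]
    using assms by (simp add: field_simps power2_eq_square)
  also have "\<dots> = qrt_discr a b g d e m (snd p) / qrt_den a b g d e m p ^ 2"
    by (simp add: qrt_num_def qrt_den_def qrt_discr_def Let_def) algebra
  finally show "jacobian_det (qrt_map a b g d e m) p = qrt_discr a b g d e m (snd p) / qrt_den a b g d e m p ^ 2" .
qed

lemma quotient_flips_sign: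
  fixes u v U V k D :: real
  assumes "u * D^2 = - k * U" and "v * D^2 = k * V" and "D \<noteq> 0" and "v \<noteq> 0"
  shows "u / v = - (U / V)"
proof -
  have "k \<noteq> 0" using assms(2-4) by auto
  have "u = - k * U / D^2" and "v = k * V / D^2"
    using assms(1-3) by (simp_all add: field_simps)
  then have "u / v = (- k * U / D^2) / (k * V / D^2)" by simp
  also have "\<dots> = - (U / V)"
    using \<open>k \<noteq> 0\<close> assms(3) by (simp add: field_simps)
  finally show ?thesis .
qed

lemma jacobian_eq_inverse_ratio:
  fixes J u U k D :: real
  assumes "J = k / D^2" and "u * D^2 = k * U" and "D \<noteq> 0" and "U \<noteq> 0"
  shows "J = inverse U / inverse u"
proof -
  have "u * D^2 = (J * U) * D^2" using assms(1-3) by (simp add: field_simps)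
  then have "u = J * U" using assms(3) by simp
  then show ?thesis using assms(4) by (cases "u = 0") (simp_all add: field_simps)
qed

lemma I_inv_qrt_map:
  assumes "qrt_den a b g d e m p \<noteq> 0" and "biquad (A1mat a b g d e m) (qrt_map a b g d e m p) \<noteq> 0"
  shows "I_inv a b g d e m (qrt_map a b g d e m p) = - I_inv a b g d e m p"
  unfolding I_inv_def
  by (rule quotient_flips_sign[OF biquad_symmat_qrt_map_self[OF assms(1)] biquad_A1mat_qrt_map[OF assms(1)] assms])

lemma I_inv_Psi1_map:
  assumes "Psi1_den a b g d e m p \<noteq> 0" and "biquad (A1mat a b g d e m) (Psi1_map a b g d e m p) \<noteq> 0"
  shows "I_inv a b g d e m (Psi1_map a b g d e m p) = - I_inv a b g d e m p"
proof -
  define k where "k = qrt_discr (a*e - b^2) (2*a*d - 2*b*g) (b*d - g*e) (2*b*m - 2*g*d) (4*a*m - 4*g^2) (e*m - d^2) (snd p)"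
  have "biquad (symmat a b g d e m) (Psi1_map a b g d e m p) * Psi1_den a b g d e m p ^ 2
      = - (- k) * biquad (symmat a b g d e m) p"
    using biquad_symmat_Psi1_map[OF assms(1)] unfolding k_def by simp
  moreover have "biquad (A1mat a b g d e m) (Psi1_map a b g d e m p) * Psi1_den a b g d e m p ^ 2
      = - k * biquad (A1mat a b g d e m) p"
    using biquad_symmat_qrt_map_self[OF assms(1)[unfolded Psi1_den_def]]
    unfolding k_def A1mat_def Psi1_map_def Psi1_den_def .
  ultimately show ?thesis
    unfolding I_inv_def by (rule quotient_flips_sign[OF _ _ assms])
qed

lemma qrt_map_anti_measure_preserving:
  assumes "qrt_den a b g d e m p \<noteq> 0" and "biquad (symmat a b g d e m) p \<noteq> 0"
  shows "anti_measure_preserving_at (qrt_map a b g d e m) (dens a b g d e m) p"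
proof -
  have "- jacobian_det (qrt_map a b g d e m) p
      = - qrt_discr a b g d e m (snd p) / qrt_den a b g d e m p ^ 2"
    using jacobian_det_qrt_map(2)[OF assms(1)] by simp
  from jacobian_eq_inverse_ratio[OF this biquad_symmat_qrt_map_self[OF assms(1)] assms]
  show ?thesis
    unfolding anti_measure_preserving_at_def dens_def
    using jacobian_det_qrt_map(1)[OF assms(1)] by simp
qed

lemma Psi1_map_measure_preserving:
  assumes "Psi1_den a b g d e m p \<noteq> 0" and "biquad (symmat a b g d e m) p \<noteq> 0"
  shows "measure_preserving_at (Psi1_map a b g d e m) (dens a b g d e m) p"
proof -
  note den = assms(1)[unfolded Psi1_den_def]
  have "jacobian_det (Psi1_map a b g d e m) p
      = inverse (biquad (symmat a b g d e m) p) / inverse (biquad (symmat a b g d e m) (Psi1_map a b g d e m p))"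
    unfolding Psi1_map_def
    by (rule jacobian_eq_inverse_ratio[OF jacobian_det_qrt_map(2)[OF den]
          biquad_symmat_Psi1_map[OF assms(1), unfolded Psi1_map_def Psi1_den_def] den assms(2)])
  then show ?thesis
    unfolding measure_preserving_at_def dens_def Psi1_map_def
    using jacobian_det_qrt_map(1)[OF den] by simp
qed

theorem corollary4:
  fixes \<alpha> \<beta> \<gamma> \<delta> \<epsilon> \<mu> :: real
  shows
    "(\<forall>p. qrt_den \<alpha> \<beta> \<gamma> \<delta> \<epsilon> \<mu> p \<noteq> 0
          \<and> biquad (A1mat \<alpha> \<beta> \<gamma> \<delta> \<epsilon> \<mu>) p \<noteq> 0
          \<and> biquad (A1mat \<alpha> \<beta> \<gamma> \<delta> \<epsilon> \<mu>) (qrt_map \<alpha> \<beta> \<gamma> \<delta> \<epsilon> \<mu> p) \<noteq> 0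
        \<longrightarrow> I_inv \<alpha> \<beta> \<gamma> \<delta> \<epsilon> \<mu> (qrt_map \<alpha> \<beta> \<gamma> \<delta> \<epsilon> \<mu> p) ^ 2 = I_inv \<alpha> \<beta> \<gamma> \<delta> \<epsilon> \<mu> p ^ 2)
   \<and> (\<forall>p. Psi1_den \<alpha> \<beta> \<gamma> \<delta> \<epsilon> \<mu> p \<noteq> 0
          \<and> biquad (A1mat \<alpha> \<beta> \<gamma> \<delta> \<epsilon> \<mu>) p \<noteq> 0
          \<and> biquad (A1mat \<alpha> \<beta> \<gamma> \<delta> \<epsilon> \<mu>) (Psi1_map \<alpha> \<beta> \<gamma> \<delta> \<epsilon> \<mu> p) \<noteq> 0
        \<longrightarrow> I_inv \<alpha> \<beta> \<gamma> \<delta> \<epsilon> \<mu> (Psi1_map \<alpha> \<beta> \<gamma> \<delta> \<epsilon> \<mu> p) ^ 2 = I_inv \<alpha> \<beta> \<gamma> \<delta> \<epsilon> \<mu> p ^ 2)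
   \<and> (\<forall>p. qrt_den \<alpha> \<beta> \<gamma> \<delta> \<epsilon> \<mu> p \<noteq> 0
          \<and> biquad (symmat \<alpha> \<beta> \<gamma> \<delta> \<epsilon> \<mu>) p \<noteq> 0
          \<and> biquad (symmat \<alpha> \<beta> \<gamma> \<delta> \<epsilon> \<mu>) (qrt_map \<alpha> \<beta> \<gamma> \<delta> \<epsilon> \<mu> p) \<noteq> 0
        \<longrightarrow> anti_measure_preserving_at (qrt_map \<alpha> \<beta> \<gamma> \<delta> \<epsilon> \<mu>) (dens \<alpha> \<beta> \<gamma> \<delta> \<epsilon> \<mu>) p)
   \<and> (\<forall>p. Psi1_den \<alpha> \<beta> \<gamma> \<delta> \<epsilon> \<mu> p \<noteq> 0
          \<and> biquad (symmat \<alpha> \<beta> \<gamma> \<delta> \<epsilon> \<mu>) p \<noteq> 0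
          \<and> biquad (symmat \<alpha> \<beta> \<gamma> \<delta> \<epsilon> \<mu>) (Psi1_map \<alpha> \<beta> \<gamma> \<delta> \<epsilon> \<mu> p) \<noteq> 0
        \<longrightarrow> measure_preserving_at (Psi1_map \<alpha> \<beta> \<gamma> \<delta> \<epsilon> \<mu>) (dens \<alpha> \<beta> \<gamma> \<delta> \<epsilon> \<mu>) p)"
  by (simp add: I_inv_qrt_map I_inv_Psi1_map qrt_map_anti_measure_preserving
      Psi1_map_measure_preserving)

end
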